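(* Let $(X,\le)$ be a poset and $E$ an equivalence relation on $X$ with ${\le}\subseteq E$. Let $\alpha:X\to X$ be an order automorphism of $(X,\le)$ with $\alpha\subseteq E$ and $\beta:X\to X$ a dual order automorphism of $(X,\le)$ with $\beta\subseteq E$. Then: (i) if $R,S\in\mathsf{Up}(\mathbf E)$ then $R\circ S\in\mathsf{Up}(\mathbf E)$; (ii) if $R,S\in\mathsf{Down}(\mathbf E)$ then $R\circ S\in\mathsf{Down}(\mathbf E)$; (iii) $R\in\mathsf{Up}(\mathbf E)$ iff $R^c\in\mathsf{Down}(\mathbf E)$; (iv) $R\in\mathsf{Up}(\mathbf E)$ iff $R^\smile\in\mathsf{Down}(\mathbf E)$; (v) if $R\in\mathsf{Up}(\mathbf E)$ then $\alpha\circ R\in\mathsf{Up}(\mathbf E)$ and $R\circ\alpha\in\mathsf{Up}(\mathbf E)$; (vi) if $R\in\mathsf{Down}(\mathbf E)$ then $\beta\circ R\circ\beta\in\mathsf{Up}(\mathbf E)$.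
   Context: For binary relations: converse $R^\smile=\{(x,y)\mid(y,x)\in R\}$; composition $R\circ S=\{(x,y)\mid\exists z\,((x,z)\in R,(z,y)\in S)\}$. Functions $X\to X$ are identified with their graphs $\{(x,\gamma(x))\}$. For a poset $(X,\le)$ and an equivalence relation $E\supseteq{\le}$ on $X$, $E$ is partially ordered by $(u,v)\preceq(x,y)$ iff $x\le u$ and $v\le y$; $\mathbf E=(E,\preceq)$, and $\mathsf{Up}(\mathbf E)$, $\mathsf{Down}(\mathbf E)$ are its sets of up-sets and down-sets. For $R\subseteq E$, $R^c=E\setminus R$. An order automorphism is a bijection $\alpha$ with $x\le y\iff\alpha(x)\le\alpha(y)$; a dual order automorphism is a bijection $\beta$ with $x\le y\iff\beta(y)\le\beta(x)$. *)

theory Defs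
  imports Main
begin

text \<open>The poset (X, \<le>) is the type 'a with its order; functions are identified with graphs.\<close>

definition fgraph :: "('a \<Rightarrow> 'a) \<Rightarrow> ('a \<times> 'a) set" where
  "fgraph f = {(x, f x) | x. True}"

definition order_automorphism :: "('a::order \<Rightarrow> 'a) \<Rightarrow> bool" where
  "order_automorphism f \<longleftrightarrow> bij f \<and> (\<forall>x y. x \<le> y \<longleftrightarrow> f x \<le> f y)"

definition dual_order_automorphism :: "('a::order \<Rightarrow> 'a) \<Rightarrow> bool" where
  "dual_order_automorphism f \<longleftrightarrow> bij f \<and> (\<forall>x y. x \<le> y \<longleftrightarrow> f y \<le> f x)"

definition E_le :: "('a::order \<times> 'a) \<Rightarrow> ('a \<times> 'a) \<Rightarrow> bool" where
  "E_le p q \<longleftrightarrow> fst q \<le> fst p \<and> snd p \<le> snd q"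

definition Up :: "('a::order \<times> 'a) set \<Rightarrow> ('a \<times> 'a) set set" where
  "Up E = {R. R \<subseteq> E \<and> (\<forall>p\<in>R. \<forall>q\<in>E. E_le p q \<longrightarrow> q \<in> R)}"

definition Down :: "('a::order \<times> 'a) set \<Rightarrow> ('a \<times> 'a) set set" where
  "Down E = {R. R \<subseteq> E \<and> (\<forall>p\<in>R. \<forall>q\<in>E. E_le q p \<longrightarrow> q \<in> R)}"

end

theory Submission
  imports Defs
begin

text \<open>A relation in \<open>Up E\<close> is closed under widening a pair \<open>(x, y)\<close> to any \<open>(u, v) \<in> E\<close>
  with \<open>u \<le> x\<close> and \<open>y \<le> v\<close>; one in \<open>Down E\<close> under narrowing. In a composite pair the middle
  point can stay fixed while the outer ones move, so both classes are closed under composition;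
  complement and converse exchange widening and narrowing; and an order automorphism carries
  widenings to widenings, while a dual one, applied on both sides, turns narrowings into
  widenings. Transitivity of \<open>E\<close>, with \<open>\<le> \<subseteq> E\<close> and the graphs lying in \<open>E\<close>, keeps every pair
  involved inside \<open>E\<close>.\<close>

lemma UpI:
  assumes "R \<subseteq> E"
    and "\<And>x y u v. (x, y) \<in> R \<Longrightarrow> (u, v) \<in> E \<Longrightarrow> u \<le> x \<Longrightarrow> y \<le> v \<Longrightarrow> (u, v) \<in> R"
  shows "R \<in> Up E"
  using assms unfolding Up_def E_le_def by fastforce

lemma UpD:
  assumes "R \<in> Up E" "(x, y) \<in> R" "(u, v) \<in> E" "u \<le> x" "y \<le> v"
  shows "(u, v) \<in> R"
  using assms unfolding Up_def E_le_def by fastforce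

lemma Up_subset: "R \<in> Up E \<Longrightarrow> R \<subseteq> E"
  unfolding Up_def by blast

lemma DownI:
  assumes "R \<subseteq> E"
    and "\<And>x y u v. (x, y) \<in> R \<Longrightarrow> (u, v) \<in> E \<Longrightarrow> x \<le> u \<Longrightarrow> v \<le> y \<Longrightarrow> (u, v) \<in> R"
  shows "R \<in> Down E"
  using assms unfolding Down_def E_le_def by fastforce

lemma DownD:
  assumes "R \<in> Down E" "(x, y) \<in> R" "(u, v) \<in> E" "x \<le> u" "v \<le> y"
  shows "(u, v) \<in> R"
  using assms unfolding Down_def E_le_def by fastforce

lemma Down_subset: "R \<in> Down E \<Longrightarrow> R \<subseteq> E"
  unfolding Down_def by blast

lemma fgraph_subset_iff: "fgraph f \<subseteq> E \<longleftrightarrow> (\<forall>x. (x, f x) \<in> E)"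
  unfolding fgraph_def by blast

lemma fgraph_relcomp_iff [simp]: "(x, y) \<in> fgraph f O R \<longleftrightarrow> (f x, y) \<in> R"
  unfolding fgraph_def by blast

lemma relcomp_fgraph_iff [simp]: "(x, y) \<in> R O fgraph f \<longleftrightarrow> (\<exists>z. y = f z \<and> (x, z) \<in> R)"
  unfolding fgraph_def by blast

lemma relcomp_subset_trans: "trans E \<Longrightarrow> R \<subseteq> E \<Longrightarrow> S \<subseteq> E \<Longrightarrow> R O S \<subseteq> E"
  by (auto dest: transD)

lemma Up_relcomp:
  fixes E :: "('a::order \<times> 'a) set"
  assumes "trans E" "{(x, y). x \<le> y} \<subseteq> E" "R \<in> Up E" "S \<in> Up E"
  shows "R O S \<in> Up E"
proof (rule UpI)
  show "R O S \<subseteq> E"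
    using assms(1) Up_subset[OF assms(3)] Up_subset[OF assms(4)] by (rule relcomp_subset_trans)
next
  fix x y u v
  assume "(x, y) \<in> R O S" "(u, v) \<in> E" "u \<le> x" "y \<le> v"
  then obtain z where xz: "(x, z) \<in> R" and zy: "(z, y) \<in> S" by blast
  have "(u, x) \<in> E" "(y, v) \<in> E"
    using \<open>u \<le> x\<close> \<open>y \<le> v\<close> assms(2) by auto
  moreover have "(x, z) \<in> E" "(z, y) \<in> E"
    using xz zy Up_subset assms(3,4) by blast+
  ultimately have "(u, z) \<in> E" "(z, v) \<in> E"
    using \<open>trans E\<close> by (blast dest: transD)+
  then have "(u, z) \<in> R" "(z, v) \<in> S"
    using UpD[OF \<open>R \<in> Up E\<close> xz] UpD[OF \<open>S \<in> Up E\<close> zy] \<open>u \<le> x\<close> \<open>y \<le> v\<close> by auto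
  then show "(u, v) \<in> R O S" by blast
qed

lemma Up_iff_Diff_Down: "R \<subseteq> E \<Longrightarrow> R \<in> Up E \<longleftrightarrow> E - R \<in> Down E"
  unfolding Up_def Down_def by blast

lemma Up_iff_converse_Down:
  assumes "sym E" "R \<subseteq> E"
  shows "R \<in> Up E \<longleftrightarrow> R\<inverse> \<in> Down E"
proof
  assume "R \<in> Up E"
  show "R\<inverse> \<in> Down E"
  proof (rule DownI)
    show "R\<inverse> \<subseteq> E"
      using \<open>R \<subseteq> E\<close> \<open>sym E\<close> by (auto dest: symD)
    show "(u, v) \<in> R\<inverse>" if "(x, y) \<in> R\<inverse>" "(u, v) \<in> E" "x \<le> u" "v \<le> y" for x y u v
      using UpD[OF \<open>R \<in> Up E\<close>, of y x v u] that \<open>sym E\<close> by (auto dest: symD)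
  qed
next
  assume "R\<inverse> \<in> Down E"
  show "R \<in> Up E"
  proof (rule UpI)
    show "(u, v) \<in> R" if "(x, y) \<in> R" "(u, v) \<in> E" "u \<le> x" "y \<le> v" for x y u v
      using DownD[OF \<open>R\<inverse> \<in> Down E\<close>, of y x v u] that \<open>sym E\<close> by (auto dest: symD)
  qed (fact \<open>R \<subseteq> E\<close>)
qed

lemma Down_iff_converse_Up:
  assumes "sym E" "R \<subseteq> E"
  shows "R \<in> Down E \<longleftrightarrow> R\<inverse> \<in> Up E"
  using Up_iff_converse_Down[of E "R\<inverse>"] assms by (auto dest: symD)

lemma Down_relcomp:
  fixes E :: "('a::order \<times> 'a) set"
  assumes "sym E" "trans E" "{(x, y). x \<le> y} \<subseteq> E" "R \<in> Down E" "S \<in> Down E"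
  shows "R O S \<in> Down E"
proof -
  have "R\<inverse> \<in> Up E" "S\<inverse> \<in> Up E"
    using Down_iff_converse_Up[OF \<open>sym E\<close> Down_subset] assms(4,5) by blast+
  then have "(R O S)\<inverse> \<in> Up E"
    using Up_relcomp[OF \<open>trans E\<close> assms(3)] by (simp add: converse_relcomp)
  moreover have "R O S \<subseteq> E"
    using assms(2) Down_subset[OF assms(4)] Down_subset[OF assms(5)] by (rule relcomp_subset_trans)
  ultimately show ?thesis
    using Down_iff_converse_Up[OF \<open>sym E\<close>] by blast
qed

lemma fgraph_relcomp_Up:
  fixes E :: "('a::order \<times> 'a) set"
  assumes "sym E" "trans E" "fgraph f \<subseteq> E" "mono f" "R \<in> Up E"
  shows "fgraph f O R \<in> Up E"
proof (rule UpI)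
  have fE: "(x, f x) \<in> E" for x
    using \<open>fgraph f \<subseteq> E\<close> by (simp add: fgraph_subset_iff)
  show "fgraph f O R \<subseteq> E"
    using assms(2,3) Up_subset[OF assms(5)] by (rule relcomp_subset_trans)
  fix x y u v
  assume "(x, y) \<in> fgraph f O R" "(u, v) \<in> E" "u \<le> x" "y \<le> v"
  moreover have "(f u, v) \<in> E"
    using fE[of u] \<open>(u, v) \<in> E\<close> \<open>sym E\<close> \<open>trans E\<close> by (blast dest: symD transD)
  ultimately show "(u, v) \<in> fgraph f O R"
    using UpD[OF \<open>R \<in> Up E\<close>] monoD[OF \<open>mono f\<close>] by simp
qed

lemma relcomp_fgraph_Up:
  fixes E :: "('a::order \<times> 'a) set"
  assumes "sym E" "trans E" "fgraph f \<subseteq> E" "order_automorphism f" "R \<in> Up E"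
  shows "R O fgraph f \<in> Up E"
proof (rule UpI)
  have fE: "(x, f x) \<in> E" for x
    using \<open>fgraph f \<subseteq> E\<close> by (simp add: fgraph_subset_iff)
  have f_le: "x \<le> y \<longleftrightarrow> f x \<le> f y" and "surj f" for x y
    using \<open>order_automorphism f\<close> unfolding order_automorphism_def bij_def by auto
  show "R O fgraph f \<subseteq> E"
    using assms(2) Up_subset[OF assms(5)] assms(3) by (rule relcomp_subset_trans)
  fix x y u v
  assume "(x, y) \<in> R O fgraph f" "(u, v) \<in> E" "u \<le> x" "y \<le> v"
  then obtain z where "y = f z" "(x, z) \<in> R" by auto
  obtain w where "v = f w"
    using \<open>surj f\<close> by (metis surjD)
  have "(u, w) \<in> E"
    using fE[of w] \<open>(u, v) \<in> E\<close> \<open>v = f w\<close> \<open>sym E\<close> \<open>trans E\<close> by (blast dest: symD transD)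
  moreover have "z \<le> w"
    using \<open>y \<le> v\<close> \<open>y = f z\<close> \<open>v = f w\<close> f_le by simp
  ultimately have "(u, w) \<in> R"
    using UpD[OF \<open>R \<in> Up E\<close> \<open>(x, z) \<in> R\<close>] \<open>u \<le> x\<close> by blast
  then show "(u, v) \<in> R O fgraph f"
    using \<open>v = f w\<close> by auto
qed

lemma fgraph_conj_Down_Up:
  fixes E :: "('a::order \<times> 'a) set"
  assumes "sym E" "trans E" "fgraph f \<subseteq> E" "dual_order_automorphism f" "R \<in> Down E"
  shows "fgraph f O R O fgraph f \<in> Up E"
proof (rule UpI)
  have fE: "(x, f x) \<in> E" for x
    using \<open>fgraph f \<subseteq> E\<close> by (simp add: fgraph_subset_iff)
  have f_le: "x \<le> y \<longleftrightarrow> f y \<le> f x" and "surj f" for x y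
    using \<open>dual_order_automorphism f\<close> unfolding dual_order_automorphism_def bij_def by auto
  show "fgraph f O R O fgraph f \<subseteq> E"
    using relcomp_subset_trans[OF \<open>trans E\<close> \<open>fgraph f \<subseteq> E\<close>
        relcomp_subset_trans[OF \<open>trans E\<close> Down_subset[OF \<open>R \<in> Down E\<close>] \<open>fgraph f \<subseteq> E\<close>]]
    by (simp add: O_assoc)
  fix x y u v
  assume "(x, y) \<in> fgraph f O R O fgraph f" "(u, v) \<in> E" "u \<le> x" "y \<le> v"
  then obtain z where "y = f z" "(f x, z) \<in> R" by auto
  obtain w where "v = f w"
    using \<open>surj f\<close> by (metis surjD)
  have "(f u, w) \<in> E"
    using fE[of u] fE[of w] \<open>(u, v) \<in> E\<close> \<open>v = f w\<close> \<open>sym E\<close> \<open>trans E\<close>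
    by (blast dest: symD transD)
  moreover have "f x \<le> f u" "w \<le> z"
    using \<open>u \<le> x\<close> \<open>y \<le> v\<close> \<open>y = f z\<close> \<open>v = f w\<close> f_le by simp_all
  ultimately have "(f u, w) \<in> R"
    using DownD[OF \<open>R \<in> Down E\<close> \<open>(f x, z) \<in> R\<close>] by blast
  then show "(u, v) \<in> fgraph f O R O fgraph f"
    using \<open>v = f w\<close> by auto
qed

theorem lemma3p5:
  fixes E :: "('a::order \<times> 'a) set" and \<alpha> \<beta> :: "'a \<Rightarrow> 'a"
  assumes "equiv UNIV E"
    and "{(x, y). x \<le> y} \<subseteq> E"
    and "order_automorphism \<alpha>" and "fgraph \<alpha> \<subseteq> E"
    and "dual_order_automorphism \<beta>" and "fgraph \<beta> \<subseteq> E"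
  shows "(\<forall>R S. R \<in> Up E \<and> S \<in> Up E \<longrightarrow> R O S \<in> Up E)
    \<and> (\<forall>R S. R \<in> Down E \<and> S \<in> Down E \<longrightarrow> R O S \<in> Down E)
    \<and> (\<forall>R. R \<subseteq> E \<longrightarrow> (R \<in> Up E \<longleftrightarrow> E - R \<in> Down E))
    \<and> (\<forall>R. R \<subseteq> E \<longrightarrow> (R \<in> Up E \<longleftrightarrow> R\<inverse> \<in> Down E))
    \<and> (\<forall>R. R \<in> Up E \<longrightarrow> fgraph \<alpha> O R \<in> Up E \<and> R O fgraph \<alpha> \<in> Up E)
    \<and> (\<forall>R. R \<in> Down E \<longrightarrow> fgraph \<beta> O R O fgraph \<beta> \<in> Up E)"
proof -
  have "sym E" "trans E"
    using \<open>equiv UNIV E\<close> by (simp_all add: equiv_def)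
  have "mono \<alpha>"
    using \<open>order_automorphism \<alpha>\<close> unfolding order_automorphism_def by (simp add: monoI)
  show ?thesis
  proof (intro conjI allI impI; (elim conjE)?)
    show "R O S \<in> Up E" if "R \<in> Up E" "S \<in> Up E" for R S
      using Up_relcomp \<open>trans E\<close> assms(2) that .
    show "R O S \<in> Down E" if "R \<in> Down E" "S \<in> Down E" for R S
      using Down_relcomp \<open>sym E\<close> \<open>trans E\<close> assms(2) that .
    show "R \<in> Up E \<longleftrightarrow> E - R \<in> Down E" if "R \<subseteq> E" for R
      using that by (rule Up_iff_Diff_Down)
    show "R \<in> Up E \<longleftrightarrow> R\<inverse> \<in> Down E" if "R \<subseteq> E" for R
      using \<open>sym E\<close> that by (rule Up_iff_converse_Down)
    show "fgraph \<alpha> O R \<in> Up E" if "R \<in> Up E" for R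
      using fgraph_relcomp_Up \<open>sym E\<close> \<open>trans E\<close> assms(4) \<open>mono \<alpha>\<close> that .
    show "R O fgraph \<alpha> \<in> Up E" if "R \<in> Up E" for R
      using relcomp_fgraph_Up \<open>sym E\<close> \<open>trans E\<close> assms(4,3) that .
    show "fgraph \<beta> O R O fgraph \<beta> \<in> Up E" if "R \<in> Down E" for R
      using fgraph_conj_Down_Up \<open>sym E\<close> \<open>trans E\<close> assms(6,5) that .
  qed
qed

end
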